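(* Let $N\ge 3$, $\Omega=\{x\in\mathbb{R}^N : 1<|x|<3\}$, $\Psi_\alpha(x)=\big||x|-2\big|^\alpha$ for $\alpha>0$, and for $p>2$, $u\in H^1_0(\Omega)\setminus\{0\}$, $$R_{\alpha,p}(u)=\frac{\int_\Omega|\nabla u|^2\,dx}{\left(\int_\Omega \Psi_\alpha |u|^p\,dx\right)^{2/p}},\qquad S_{\alpha,p}=\inf_{u\in H^1_{0}(\Omega)\setminus\{0\}} R_{\alpha,p}(u).$$ Let $p\in(2,2^* )$, where $2^*=2N/(N-2)$. Then there exist $\bar\alpha>0$ and a constant $C>0$ (independent of $\alpha$) such that for all $\alpha\ge\bar\alpha$ $$S_{\alpha,p}\le C\,\alpha^{2-N+\frac{2N}{p}}.$$ *)

theory Defs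
  imports "HOL-Analysis.Analysis"
begin

definition annulus :: "(real^'n) set" where
  "annulus = {x. 1 < norm x \<and> norm x < 3}"

definition Psi :: "real \<Rightarrow> real^'n \<Rightarrow> real" where
  "Psi \<alpha> x = \<bar>norm x - 2\<bar> powr \<alpha>"

text \<open>These form a dense subset of
  \<open>H^1_0(\<Omega>) \ {0}\<close>.\<close>
definition admissible :: "(real^'n) set \<Rightarrow> (real^'n \<Rightarrow> real) \<Rightarrow> (real^'n \<Rightarrow> real^'n) \<Rightarrow> bool" where
  "admissible \<Omega> u g \<longleftrightarrow>
     (\<forall>x. GDERIV u x :> g x) \<and> continuous_on UNIV g \<and>
     compact (closure {x. u x \<noteq> 0}) \<and> closure {x. u x \<noteq> 0} \<subseteq> \<Omega> \<and>
     (\<exists>x. u x \<noteq> 0)"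

definition Rquot :: "(real^'n) set \<Rightarrow> real \<Rightarrow> real \<Rightarrow> (real^'n \<Rightarrow> real) \<Rightarrow> (real^'n \<Rightarrow> real^'n) \<Rightarrow> real" where
  "Rquot \<Omega> \<alpha> p u g =
     (LINT x:\<Omega>|lborel. (norm (g x))\<^sup>2) /
     (LINT x:\<Omega>|lborel. Psi \<alpha> x * \<bar>u x\<bar> powr p) powr (2 / p)"

definition Sap :: "(real^'n) set \<Rightarrow> real \<Rightarrow> real \<Rightarrow> real" where
  "Sap \<Omega> \<alpha> p = Inf {Rquot \<Omega> \<alpha> p u g | u g. admissible \<Omega> u g}"

end

theory Submission
  imports Defs
begin

text \<open>Test the infimum with the bump \<open>(1 - |x - x0|^2 / r^2)_+^2\<close> of radius \<open>r = 1/\<alpha>\<close>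
  whose ball touches the outer sphere \<open>|x| = 3\<close>, where the weight is largest. Its Dirichlet
  energy is at most \<open>16 |B_1| r^(N-2)\<close>. On its support \<open>||x| - 2| \<ge> 1 - 3/\<alpha>\<close>, so
  \<open>\<Psi>_\<alpha> \<ge> (1 - 3/\<alpha>)^\<alpha> \<ge> e^(-5)\<close>; as the bump is at least \<open>1/2\<close> on the ball of radius
  \<open>r/2\<close>, the weighted \<open>L^p\<close> integral is at least a constant times \<open>r^N\<close>. Hence the Rayleigh
  quotient is \<open>O(r^(N-2-2N/p)) = O(\<alpha>^(2-N+2N/p))\<close>.\<close>

lemma DERIV_sq_pos_part:
  "((\<lambda>s::real. (max 0 s)\<^sup>2) has_real_derivative 2 * max 0 s) (at s)"
proof -
  consider "s < 0" | "s = 0" | "s > 0" by linarith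
  then show ?thesis
  proof cases
    case 1
    have "((\<lambda>_. 0) has_real_derivative 2 * max 0 s) (at s)"
      using 1 by (simp add: max_def)
    then show ?thesis
      by (rule has_field_derivative_transform_within_open[where S="{..<0}"]) (use 1 in auto)
  next
    case 2
    have "\<forall>\<^sub>F y in at 0. (max 0 y)\<^sup>2 / y = max 0 (y::real)"
      by (auto simp: eventually_at_filter max_def power2_eq_square)
    moreover have "((\<lambda>y::real. max 0 y) \<longlongrightarrow> max 0 0) (at 0)"
      by (intro tendsto_intros)
    ultimately have "((\<lambda>y::real. (max 0 y)\<^sup>2 / y) \<longlongrightarrow> 0) (at 0)"
      by (simp add: tendsto_cong)
    with 2 show ?thesis by (simp add: has_field_derivative_iff)
  next
    case 3
    have "((\<lambda>s. s\<^sup>2) has_real_derivative 2 * max 0 s) (at s)"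
      using 3 by (auto intro!: derivative_eq_intros)
    then show ?thesis
      by (rule has_field_derivative_transform_within_open[where S="{0<..}"]) (use 3 in auto)
  qed
qed

definition bump :: "'a::real_inner \<Rightarrow> real \<Rightarrow> 'a \<Rightarrow> real" where
  "bump x0 r x = (max 0 (1 - (norm (x - x0))\<^sup>2 / r\<^sup>2))\<^sup>2"

definition bump_grad :: "'a::real_inner \<Rightarrow> real \<Rightarrow> 'a \<Rightarrow> 'a" where
  "bump_grad x0 r x = (- 4 * max 0 (1 - (norm (x - x0))\<^sup>2 / r\<^sup>2) / r\<^sup>2) *\<^sub>R (x - x0)"

lemma GDERIV_bump: "GDERIV (bump x0 r) x :> bump_grad x0 r x"
proof -
  have "GDERIV (\<lambda>x. 1 - (norm (x - x0))\<^sup>2 / r\<^sup>2) x :> (- 2 / r\<^sup>2) *\<^sub>R (x - x0)"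
    unfolding gderiv_def power2_norm_eq_inner divide_inverse
    by (auto intro!: derivative_eq_intros simp: inner_commute algebra_simps)
  from GDERIV_DERIV_compose[OF this DERIV_sq_pos_part] show ?thesis
    unfolding bump_def bump_grad_def by (simp add: algebra_simps)
qed

lemma continuous_on_bump_grad: "continuous_on S (bump_grad x0 r)"
  unfolding bump_grad_def divide_inverse by (intro continuous_intros)

lemma bump_nonneg: "0 \<le> bump x0 r x"
  by (simp add: bump_def)

lemma bump_le_one: "bump x0 r x \<le> 1"
  unfolding bump_def by (auto simp: max_def power_le_one_iff intro!: power_le_one)

lemma dist_lt_iff_norm_sq_div_lt_one:
  fixes x0 :: "'a::real_normed_vector"
  assumes "0 < r"
  shows "dist x0 x < r \<longleftrightarrow> (norm (x - x0))\<^sup>2 / r\<^sup>2 < 1"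
proof -
  have "dist x0 x < r \<longleftrightarrow> \<bar>norm (x - x0)\<bar> < \<bar>r\<bar>"
    using assms by (simp add: dist_norm norm_minus_commute)
  also have "\<dots> \<longleftrightarrow> (norm (x - x0))\<^sup>2 < r\<^sup>2"
    by (meson abs_le_square_iff not_le)
  finally show ?thesis
    using assms by simp
qed

lemma bump_neq_0_iff:
  assumes "0 < r"
  shows "bump x0 r x \<noteq> 0 \<longleftrightarrow> dist x0 x < r"
proof -
  have "(max 0 (1 - t))\<^sup>2 \<noteq> 0 \<longleftrightarrow> t < 1" for t :: real
    by (auto simp: max_def)
  then show ?thesis
    unfolding dist_lt_iff_norm_sq_div_lt_one[OF assms] bump_def .
qed

lemma bump_eq_0_outside_cball:
  assumes "0 < r" "x \<notin> cball x0 r"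
  shows "bump x0 r x = 0"
  using assms bump_neq_0_iff[OF assms(1), of x0 x] by auto

lemma bump_grad_eq_0: "bump x0 r x = 0 \<Longrightarrow> bump_grad x0 r x = 0"
  by (simp add: bump_def bump_grad_def)

lemma bump_ge_half:
  assumes "0 < r" "dist x0 x < r / 2"
  shows "1 / 2 \<le> bump x0 r x"
proof -
  have "norm (x - x0) < r / 2"
    using assms(2) by (simp add: dist_norm norm_minus_commute)
  then have "(norm (x - x0))\<^sup>2 < (r / 2)\<^sup>2"
    by (simp add: power_strict_mono)
  then have "3 / 4 \<le> 1 - (norm (x - x0))\<^sup>2 / r\<^sup>2"
    using assms(1) by (simp add: power_divide field_simps)
  then have "(3 / 4)\<^sup>2 \<le> (max 0 (1 - (norm (x - x0))\<^sup>2 / r\<^sup>2))\<^sup>2"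
    by (intro power_mono) (auto simp: le_max_iff_disj)
  moreover have "1 / 2 \<le> (3 / 4 :: real)\<^sup>2"
    by (simp add: power2_eq_square)
  ultimately show ?thesis
    unfolding bump_def by linarith
qed

lemma norm_bump_grad_le:
  assumes "0 < r"
  shows "norm (bump_grad x0 r x) \<le> 4 / r"
proof (cases "dist x0 x < r")
  case True
  have "norm (bump_grad x0 r x) = 4 * max 0 (1 - (norm (x - x0))\<^sup>2 / r\<^sup>2) / r\<^sup>2 * norm (x - x0)"
    by (simp add: bump_grad_def)
  also have "\<dots> \<le> 4 * 1 / r\<^sup>2 * r"
    using True assms by (intro mult_mono divide_right_mono)
      (auto simp: dist_norm norm_minus_commute)
  finally show ?thesis
    using assms by (simp add: power2_eq_square)
next
  case False
  then show ?thesis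
    using assms bump_neq_0_iff bump_grad_eq_0 by fastforce
qed

lemma admissible_bump:
  fixes x0 :: "real^'n"
  assumes "0 < r" "cball x0 r \<subseteq> \<Omega>"
  shows "admissible \<Omega> (bump x0 r) (bump_grad x0 r)"
proof -
  have "{x. bump x0 r x \<noteq> 0} = ball x0 r"
    by (simp add: set_eq_iff bump_neq_0_iff[OF assms(1)])
  with assms show ?thesis
    unfolding admissible_def
    by (auto simp: GDERIV_bump continuous_on_bump_grad intro!: exI[of _ x0])
qed

lemma set_integral_norm_bump_grad_sq_le:
  fixes x0 :: "'a::euclidean_space"
  assumes "0 < r"
  shows "(LINT x:\<Omega>|lborel. (norm (bump_grad x0 r x))\<^sup>2) \<le> 16 / r\<^sup>2 * measure lborel (cball x0 r)"
proof -
  have "(LINT x:\<Omega>|lborel. (norm (bump_grad x0 r x))\<^sup>2) \<le> (\<integral>x. 16 / r\<^sup>2 * indicator (cball x0 r) x \<partial>lborel)"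
    unfolding set_lebesgue_integral_def
  proof (rule integral_mono')
    show "integrable lborel (\<lambda>x. 16 / r\<^sup>2 * indicator (cball x0 r) x)"
      by (intro integrable_mult_right integrable_real_indicator emeasure_lborel_cball_finite) auto
  next
    fix x
    show "indicator \<Omega> x *\<^sub>R (norm (bump_grad x0 r x))\<^sup>2 \<le> 16 / r\<^sup>2 * indicator (cball x0 r) x"
    proof (cases "x \<in> cball x0 r")
      case True
      have "(norm (bump_grad x0 r x))\<^sup>2 \<le> (4 / r)\<^sup>2"
        using norm_bump_grad_le[OF assms] by (intro power_mono) auto
      then show ?thesis
        using True by (simp add: indicator_def power_divide)
    qed (simp add: bump_grad_eq_0 bump_eq_0_outside_cball[OF assms])
  qed simp
  also have "\<dots> = 16 / r\<^sup>2 * measure lborel (cball x0 r)"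
    by simp
  finally show ?thesis .
qed

lemma set_integral_weighted_bump_powr_ge:
  fixes x0 :: "'a::euclidean_space" and w :: "'a \<Rightarrow> real"
  assumes "\<Omega> \<in> sets lborel" "w \<in> borel_measurable lborel" "0 < r" "cball x0 r \<subseteq> \<Omega>" "0 < p"
    and w_bounds: "\<And>x. x \<in> cball x0 r \<Longrightarrow> c \<le> w x \<and> w x \<le> M" and "0 \<le> c"
  shows "c / 2 powr p * measure lborel (ball x0 (r / 2)) \<le> (LINT x:\<Omega>|lborel. w x * \<bar>bump x0 r x\<bar> powr p)"
proof -
  let ?f = "\<lambda>x. indicator \<Omega> x *\<^sub>R (w x * \<bar>bump x0 r x\<bar> powr p)"
  have outside: "?f x = 0" if "x \<notin> cball x0 r" for x
    using bump_eq_0_outside_cball[OF assms(3) that] by simp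
  have bump_powr_le: "\<bar>bump x0 r x\<bar> powr p \<le> 1" for x
    using assms(5) bump_nonneg[of x0 r x] bump_le_one[of x0 r x] by (intro powr_le1) auto
  have f_nonneg: "0 \<le> ?f x" for x
    using w_bounds assms(7) outside[of x] by (cases "x \<in> cball x0 r") force+
  have "integrable lborel ?f"
  proof (rule Bochner_Integration.integrable_bound)
    show "integrable lborel (\<lambda>x. M * indicator (cball x0 r) x)"
      by (intro integrable_mult_right integrable_real_indicator emeasure_lborel_cball_finite) auto
    have "continuous_on UNIV (bump x0 r)"
      unfolding bump_def divide_inverse by (intro continuous_intros)
    then show "?f \<in> borel_measurable lborel"
      using assms(1,2) by (measurable; intro borel_measurable_continuous_onI)
    show "AE x in lborel. norm (?f x) \<le> norm (M * indicator (cball x0 r) x)"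
    proof (rule AE_I2)
      fix x
      show "norm (?f x) \<le> norm (M * indicator (cball x0 r) x)"
      proof (cases "x \<in> cball x0 r")
        case True
        then have "0 \<le> w x * \<bar>bump x0 r x\<bar> powr p" "w x * \<bar>bump x0 r x\<bar> powr p \<le> M * 1"
          using w_bounds[OF True] assms(7) bump_powr_le[of x]
          by (auto intro!: mult_mono simp del: mult_1_right)
        then show ?thesis
          using True assms(4) by (auto simp: indicator_def)
      qed (use outside[of x] in simp)
    qed
  qed
  then have "(\<integral>x. c / 2 powr p * indicator (ball x0 (r / 2)) x \<partial>lborel) \<le> integral\<^sup>L lborel ?f"
  proof (rule integral_mono')
    fix x
    show "0 \<le> ?f x"
      by (rule f_nonneg)
    show "c / 2 powr p * indicator (ball x0 (r / 2)) x \<le> ?f x"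
    proof (cases "x \<in> ball x0 (r / 2)")
      case True
      then have x_in: "x \<in> cball x0 r" "x \<in> \<Omega>"
        using assms(3,4) by auto
      have "1 / 2 \<le> \<bar>bump x0 r x\<bar>"
        using True bump_ge_half[OF assms(3)] by fastforce
      then have "1 / 2 powr p \<le> \<bar>bump x0 r x\<bar> powr p"
        using assms(5) powr_mono2[of p "1 / 2"] by (simp add: powr_divide)
      then have "c * (1 / 2 powr p) \<le> w x * \<bar>bump x0 r x\<bar> powr p"
        using w_bounds[OF x_in(1)] assms(7) by (intro mult_mono) auto
      then show ?thesis
        using True x_in by simp
    qed (use f_nonneg[of x] in simp)
  qed
  then show ?thesis
    unfolding set_lebesgue_integral_def by simp
qed

lemma Sap_le_Rquot:
  assumes "admissible \<Omega> u g"
  shows "Sap \<Omega> \<alpha> p \<le> Rquot \<Omega> \<alpha> p u g"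
  unfolding Sap_def
proof (rule cInf_lower)
  show "bdd_below {Rquot \<Omega> \<alpha> p u g | u g. admissible \<Omega> u g}"
    unfolding Rquot_def set_lebesgue_integral_def
    by (rule bdd_belowI[of _ 0]) (auto intro!: divide_nonneg_nonneg Bochner_Integration.integral_nonneg)
qed (use assms in blast)

lemma Rquot_bump_le:
  fixes x0 :: "real^'n"
  assumes "\<Omega> \<in> sets lborel" "0 < r" "cball x0 r \<subseteq> \<Omega>" "0 < p" "0 < c"
    and "\<And>x. x \<in> cball x0 r \<Longrightarrow> c \<le> Psi \<alpha> x \<and> Psi \<alpha> x \<le> M"
  shows "Rquot \<Omega> \<alpha> p (bump x0 r) (bump_grad x0 r)
    \<le> 16 / r\<^sup>2 * measure lborel (cball x0 r) / (c / 2 powr p * measure lborel (ball x0 (r / 2))) powr (2 / p)"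
  unfolding Rquot_def
proof (rule frac_le)
  have "Psi \<alpha> \<in> borel_measurable lborel"
    unfolding Psi_def by measurable
  with assms show "(c / 2 powr p * measure lborel (ball x0 (r / 2))) powr (2 / p)
      \<le> (LINT x:\<Omega>|lborel. Psi \<alpha> x * \<bar>bump x0 r x\<bar> powr p) powr (2 / p)"
    by (intro powr_mono2 set_integral_weighted_bump_powr_ge) auto
qed (use assms set_integral_norm_bump_grad_sq_le in auto)

lemma abs_norm_diff_le_of_mem_cball:
  fixes y :: "'a::real_normed_vector"
  shows "x \<in> cball y r \<Longrightarrow> \<bar>norm x - norm y\<bar> \<le> r"
  using norm_triangle_ineq3[of x y] by (simp add: dist_norm norm_minus_commute)

lemma cball_subset_annulus:
  fixes e :: "real^'n"
  assumes "norm e = 1" "0 < r" "r < 2 / 3"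
  shows "cball ((3 - 2 * r) *\<^sub>R e) r \<subseteq> annulus"
proof
  fix x
  assume "x \<in> cball ((3 - 2 * r) *\<^sub>R e) r"
  then have "\<bar>norm x - (3 - 2 * r)\<bar> \<le> r"
    using abs_norm_diff_le_of_mem_cball assms by fastforce
  with assms show "x \<in> annulus"
    unfolding annulus_def by auto
qed

lemma exp_le_one_minus_powr:
  fixes \<alpha> :: real
  assumes "12 \<le> \<alpha>"
  shows "exp (-5) \<le> (1 - 3 / \<alpha>) powr \<alpha>"
proof -
  have "- (3 / \<alpha>) - 2 * (3 / \<alpha>)\<^sup>2 \<le> ln (1 - 3 / \<alpha>)"
    using assms by (intro ln_one_minus_pos_lower_bound) auto
  then have "\<alpha> * (- (3 / \<alpha>) - 2 * (3 / \<alpha>)\<^sup>2) \<le> \<alpha> * ln (1 - 3 / \<alpha>)"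
    using assms by (intro mult_left_mono) auto
  moreover have "\<alpha> * (- (3 / \<alpha>) - 2 * (3 / \<alpha>)\<^sup>2) = - 3 - 18 / \<alpha>"
    using assms by (simp add: power2_eq_square field_simps)
  moreover have "18 / \<alpha> \<le> 2"
    using assms by (simp add: divide_le_eq)
  ultimately have "exp (-5) \<le> exp (\<alpha> * ln (1 - 3 / \<alpha>))"
    by simp
  also have "\<dots> = (1 - 3 / \<alpha>) powr \<alpha>"
    using assms by (simp add: powr_def)
  finally show ?thesis .
qed

lemma Psi_bounds_near_outer_sphere:
  fixes e :: "real^'n"
  assumes "norm e = 1" "12 \<le> \<alpha>" "x \<in> cball ((3 - 2 / \<alpha>) *\<^sub>R e) (1 / \<alpha>)"
  shows "exp (-5) \<le> Psi \<alpha> x \<and> Psi \<alpha> x \<le> 1"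
proof -
  have small: "1 / \<alpha> \<le> 1 / 12"
    using assms(2) by (simp add: divide_le_eq)
  then have "\<bar>norm x - (3 - 2 / \<alpha>)\<bar> \<le> 1 / \<alpha>"
    using abs_norm_diff_le_of_mem_cball[OF assms(3)] assms(1) by simp
  with small have shell: "1 - 3 / \<alpha> \<le> \<bar>norm x - 2\<bar>" "\<bar>norm x - 2\<bar> \<le> 1"
    by auto
  have "exp (-5) \<le> (1 - 3 / \<alpha>) powr \<alpha>"
    using assms(2) by (rule exp_le_one_minus_powr)
  also have "\<dots> \<le> Psi \<alpha> x"
    unfolding Psi_def using shell assms(2) small by (intro powr_mono2) auto
  finally show ?thesis
    unfolding Psi_def using shell assms(2) by (auto intro: powr_le1)
qed

lemma powr_scaling_quotient:
  fixes a A B p :: real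
  assumes "0 < a"
  shows "A * a\<^sup>2 * (1 / a) ^ N / (B * (1 / a) ^ N) powr (2 / p)
    = A / B powr (2 / p) * a powr (2 - real N + 2 * real N / p)"
proof -
  have inv_pow: "(1 / a) ^ N = inverse (a powr real N)"
    using assms by (simp add: powr_realpow divide_inverse power_inverse)
  have sq: "a\<^sup>2 = a powr 2"
    using assms by (simp add: powr_realpow)
  have "(B * inverse (a powr real N)) powr (2 / p) = B powr (2 / p) * inverse (a powr (2 * real N / p))"
    using assms by (simp add: powr_mult powr_powr powr_minus[symmetric] mult.commute)
  moreover have "a powr (2 - real N + 2 * real N / p) = a powr 2 * inverse (a powr real N) * a powr (2 * real N / p)"
    by (simp add: powr_add[symmetric] powr_minus[symmetric])
  ultimately show ?thesis
    unfolding inv_pow sq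
    by (simp only: divide_inverse inverse_mult_distrib inverse_inverse_eq mult_ac)
qed

lemma Sap_annulus_le:
  assumes "12 \<le> \<alpha>" "0 < p"
  shows "Sap (annulus :: (real^'n) set) \<alpha> p
    \<le> 16 * measure lborel (ball (0 :: real^'n) 1) * \<alpha>\<^sup>2 * (1 / \<alpha>) ^ CARD('n)
      / (exp (-5) / 2 powr p * measure lborel (ball (0 :: real^'n) 1) / 2 ^ CARD('n) * (1 / \<alpha>) ^ CARD('n)) powr (2 / p)"
proof -
  obtain e :: "real^'n" where e: "norm e = 1"
    using vector_choose_size[of 1] by auto
  define r where "r = 1 / \<alpha>"
  define x0 where "x0 = (3 - 2 / \<alpha>) *\<^sub>R e"
  have r: "0 < r" "r < 2 / 3"
    using assms(1) by (auto simp: r_def divide_less_eq)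
  have ball_in: "cball x0 r \<subseteq> annulus"
    using cball_subset_annulus[OF e r] by (simp add: x0_def r_def)
  have "annulus \<in> sets lborel"
    unfolding annulus_def by measurable
  have "Sap (annulus :: (real^'n) set) \<alpha> p \<le> Rquot annulus \<alpha> p (bump x0 r) (bump_grad x0 r)"
    by (rule Sap_le_Rquot, rule admissible_bump) (use ball_in r in auto)
  also have "\<dots> \<le> 16 / r\<^sup>2 * measure lborel (cball x0 r) / (exp (-5) / 2 powr p * measure lborel (ball x0 (r / 2))) powr (2 / p)"
    using \<open>annulus \<in> sets lborel\<close> ball_in r assms Psi_bounds_near_outer_sphere[OF e assms(1)]
    by (intro Rquot_bump_le) (auto simp: x0_def r_def)
  also have "16 / r\<^sup>2 = 16 * \<alpha>\<^sup>2"
    by (simp add: r_def power_divide)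
  also have "measure lborel (cball x0 r) = measure lborel (ball (0 :: real^'n) 1) * (1 / \<alpha>) ^ CARD('n)"
    using content_ball_conv_unit_ball[of r x0] r by (simp add: content_cball_conv_ball r_def)
  also have "measure lborel (ball x0 (r / 2))
      = measure lborel (ball (0 :: real^'n) 1) / 2 ^ CARD('n) * (1 / \<alpha>) ^ CARD('n)"
    using content_ball_conv_unit_ball[of "r / 2" x0] r by (simp add: r_def power_divide)
  finally show ?thesis
    by (simp only: mult_ac times_divide_eq_right)
qed

theorem lemma2p3:
  fixes p :: real
  assumes "CARD('n::finite) \<ge> 3"
    and "2 < p"
    and "p < 2 * real CARD('n) / (real CARD('n) - 2)"
  shows "\<exists>\<alpha>0 > 0. \<exists>C > 0. \<forall>\<alpha> \<ge> \<alpha>0.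
           Sap (annulus :: (real^'n) set) \<alpha> p
             \<le> C * \<alpha> powr (2 - real CARD('n) + 2 * real CARD('n) / p)"
proof -
  define V where "V = measure lborel (ball (0 :: real^'n) 1)"
  define B where "B = exp (-5) / 2 powr p * V / 2 ^ CARD('n)"
  have "0 < V"
    unfolding V_def by (simp add: content_ball_pos)
  then have "0 < 16 * V / B powr (2 / p)"
    by (simp add: B_def)
  moreover have "Sap (annulus :: (real^'n) set) \<alpha> p
      \<le> 16 * V / B powr (2 / p) * \<alpha> powr (2 - real CARD('n) + 2 * real CARD('n) / p)"
    if "12 \<le> \<alpha>" for \<alpha>
  proof -
    have "Sap (annulus :: (real^'n) set) \<alpha> p
        \<le> 16 * V * \<alpha>\<^sup>2 * (1 / \<alpha>) ^ CARD('n) / (B * (1 / \<alpha>) ^ CARD('n)) powr (2 / p)"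
      using Sap_annulus_le[where 'n='n, OF that] assms(2) by (simp add: V_def B_def)
    also have "\<dots> = 16 * V / B powr (2 / p) * \<alpha> powr (2 - real CARD('n) + 2 * real CARD('n) / p)"
      using that by (intro powr_scaling_quotient) simp
    finally show ?thesis .
  qed
  ultimately show ?thesis
    by (intro exI[of _ 12] exI[of _ "16 * V / B powr (2 / p)"]) auto
qed

end
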